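(* If $P\in\{0,1\}^{k\times\ell}$ is a pattern with (at most) two nonempty rows, more precisely with exactly two nonempty rows, then $P$ is row-bounding, i.e., $\mathrm{Av}(P)$ is row-bounded.
   Context: All matrices are binary; rows numbered top to bottom, columns left to right; a row is nonempty if it contains a 1-entry. $(a,b]=\{a+1,\dots,b\}$. A pattern $P\in\{0,1\}^{k\times\ell}$ is an interval minor of $M\in\{0,1\}^{m\times n}$ if there are integers $0=r_0<\dots<r_k=m$ and $0=c_0<\dots<c_\ell=n$ such that for each 1-entry $(i,j)$ of $P$ the submatrix of $M$ on rows $(r_{i-1},r_i]$ and columns $(c_{j-1},c_j]$ contains a 1-entry; otherwise $M$ avoids $P$. $\mathrm{Av}(P)$ is the set of binary matrices avoiding $P$. $M\in\mathrm{Av}(P)$ is critical if changing any single 0-entry of $M$ to a 1-entry produces a matrix containing $P$. A horizontal 0-run is a maximal set of consecutive 0-entries within one row; the complexity of a row is the number of such runs in it. $\mathrm{Av}(P)$ is row-bounded (and $P$ row-bounding) if there is a constant bounding the complexity of every row of every critical matrix in $\mathrm{Av}(P)$. *)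

theory Defs
  imports Main
begin

text \<open>A binary matrix with m rows and n columns is represented by a function
  M :: nat => nat => bool together with its dimensions; entry (i,j), 0-indexed
  with i < m and j < n, is a 1-entry iff M i j. Values outside the range are ignored.\<close>

type_synonym bmat = "nat \<Rightarrow> nat \<Rightarrow> bool"

text \<open>P (k x l) is an interval minor of M (m x n): there are 0 = r 0 < ... < r k = m
  and 0 = c 0 < ... < c l = n such that for each 1-entry (i,j) of P the block
  of rows [r i, r (i+1)) and columns [c j, c (j+1)) contains a 1-entry (0-indexed version
  of the half-open intervals (r_{i-1}, r_i]).\<close>

definition contains :: "bmat \<Rightarrow> nat \<Rightarrow> nat \<Rightarrow> bmat \<Rightarrow> nat \<Rightarrow> nat \<Rightarrow> bool" where
  "contains P k l M m n \<longleftrightarrow>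
     (\<exists>r c :: nat \<Rightarrow> nat.
        r 0 = 0 \<and> r k = m \<and> (\<forall>i<k. r i < r (Suc i)) \<and>
        c 0 = 0 \<and> c l = n \<and> (\<forall>j<l. c j < c (Suc j)) \<and>
        (\<forall>i<k. \<forall>j<l. P i j \<longrightarrow>
           (\<exists>a b. r i \<le> a \<and> a < r (Suc i) \<and> c j \<le> b \<and> b < c (Suc j) \<and> M a b)))"

definition avoids :: "bmat \<Rightarrow> nat \<Rightarrow> nat \<Rightarrow> bmat \<Rightarrow> nat \<Rightarrow> nat \<Rightarrow> bool" where
  "avoids P k l M m n \<longleftrightarrow> \<not> contains P k l M m n"

definition set_one :: "bmat \<Rightarrow> nat \<Rightarrow> nat \<Rightarrow> bmat" where
  "set_one M a b = M(a := (M a)(b := True))"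

definition critical :: "bmat \<Rightarrow> nat \<Rightarrow> nat \<Rightarrow> bmat \<Rightarrow> nat \<Rightarrow> nat \<Rightarrow> bool" where
  "critical P k l M m n \<longleftrightarrow> avoids P k l M m n \<and>
     (\<forall>a<m. \<forall>b<n. \<not> M a b \<longrightarrow> contains P k l (set_one M a b) m n)"

text \<open>Complexity of row a of an m x n matrix: the number of horizontal 0-runs,
  counted by their leftmost entries.\<close>

definition row_complexity :: "bmat \<Rightarrow> nat \<Rightarrow> nat \<Rightarrow> nat" where
  "row_complexity M n a = card {b. b < n \<and> \<not> M a b \<and> (b = 0 \<or> M a (b - 1))}"

definition row_bounding :: "bmat \<Rightarrow> nat \<Rightarrow> nat \<Rightarrow> bool" where
  "row_bounding P k l \<longleftrightarrow>
     (\<exists>C::nat. \<forall>M m n. critical P k l M m n \<longrightarrow> (\<forall>a<m. row_complexity M n a \<le> C))"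

definition nonempty_row :: "bmat \<Rightarrow> nat \<Rightarrow> nat \<Rightarrow> bool" where
  "nonempty_row P l i \<longleftrightarrow> (\<exists>j<l. P i j)"

end

(*
  Fix a row a of a critical matrix M and let g z count the one-entries of row a left of
  column z. Different zero-runs of row a have different values of g, so it suffices to show
  that g takes boundedly many values on the zero-entries of row a.

  Turning a zero-entry (a, z) into a one creates a copy of P in which (a, z) is the only
  entry of the block of some one-entry of P in one of its two nonempty rows, ia; let io be
  the other one. Re-embedding the columns of P up to the column of z greedily through the
  ones of row a shows that g z lies at most l above 0 or above the value of g at a column,
  left of z, carrying a one of block io. The same greedy argument shows that such columns
  carry at most l distinct values of g, even after enlarging block io to the largest block
  compatible with row a lying in block ia, which no longer depends on the copy. Hence the
  complexity of row a is at most (2 l + 1)(l + 1).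
*)

theory Submission
  imports Defs
begin

definition in_block :: "(nat \<Rightarrow> nat) \<Rightarrow> nat \<Rightarrow> nat \<Rightarrow> bool" where
  "in_block r i a \<longleftrightarrow> r i \<le> a \<and> a < r (Suc i)"

definition row_partition :: "nat \<Rightarrow> nat \<Rightarrow> (nat \<Rightarrow> nat) \<Rightarrow> bool" where
  "row_partition k m r \<longleftrightarrow> r 0 = 0 \<and> r k = m \<and> (\<forall>i<k. r i < r (Suc i))"

definition column_fits :: "bmat \<Rightarrow> nat \<Rightarrow> bmat \<Rightarrow> (nat \<Rightarrow> nat) \<Rightarrow> nat \<Rightarrow> nat \<Rightarrow> nat \<Rightarrow> bool" where
  "column_fits P k M r t x y \<longleftrightarrow>
     (\<forall>i<k. P i t \<longrightarrow> (\<exists>a b. in_block r i a \<and> x \<le> b \<and> b < y \<and> M a b))"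

definition realizes :: "bmat \<Rightarrow> nat \<Rightarrow> bmat \<Rightarrow> (nat \<Rightarrow> nat) \<Rightarrow> nat \<Rightarrow> nat \<Rightarrow> nat \<Rightarrow> nat \<Rightarrow> bool" where
  "realizes P k M r t0 t1 x y \<longleftrightarrow> t0 \<le> t1 \<and> (\<exists>c. c t0 = x \<and> c t1 = y \<and>
     (\<forall>t. t0 \<le> t \<and> t < t1 \<longrightarrow> c t < c (Suc t) \<and> column_fits P k M r t (c t) (c (Suc t))))"

definition ones_in_rows :: "bmat \<Rightarrow> nat \<Rightarrow> nat \<Rightarrow> nat set \<Rightarrow> bool" where
  "ones_in_rows P k l I \<longleftrightarrow> (\<forall>i<k. \<forall>t<l. P i t \<longrightarrow> i \<in> I)"

definition block_columns :: "bmat \<Rightarrow> nat \<Rightarrow> (nat \<Rightarrow> nat) \<Rightarrow> nat \<Rightarrow> nat set" where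
  "block_columns M n r i = {b. b < n \<and> (\<exists>a. in_block r i a \<and> M a b)}"

definition ones_before :: "bmat \<Rightarrow> nat \<Rightarrow> nat \<Rightarrow> nat" where
  "ones_before M a x = card {b. b < x \<and> M a b}"

subsection \<open>Row partitions and realizations\<close>

lemma row_partition_le:
  assumes "row_partition k m r" "i \<le> i'" "i' \<le> k"
  shows "r i + (i' - i) \<le> r i'"
  using assms(2,3)
proof (induction i' rule: dec_induct)
  case (step q)
  have "r q < r (Suc q)" using assms(1) step.hyps(2) step.prems unfolding row_partition_def by simp
  then show ?case using step by (simp add: Suc_diff_le)
qed simp

lemma in_block_unique:
  assumes "row_partition k m r" "i < k" "i' < k" "in_block r i a" "in_block r i' a"
  shows "i = i'"
proof (rule ccontr)
  have "r (Suc i) \<le> r i'" if "i < i'" "i' < k" for i i'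
    using row_partition_le[OF assms(1), of "Suc i" i'] that by simp
  moreover assume "i \<noteq> i'"
  ultimately show False
    using assms(2-5) unfolding in_block_def by (meson linorder_neqE_nat not_le order.trans)
qed

lemma increasing_upto_le:
  fixes c :: "nat \<Rightarrow> nat"
  assumes "\<forall>t<l. c t < c (Suc t)" "t \<le> t'" "t' \<le> l"
  shows "c t \<le> c t'"
  using assms(2,3)
proof (induction t' rule: dec_induct)
  case (step q)
  then have "c q < c (Suc q)" using assms(1) by simp
  then show ?case using step by simp
qed simp

lemma contains_iff_columns:
  "contains P k l M m n \<longleftrightarrow> (\<exists>r c. row_partition k m r \<and> c 0 = 0 \<and> c l = n \<and>
     (\<forall>t<l. c t < c (Suc t) \<and> column_fits P k M r t (c t) (c (Suc t))))"
  unfolding contains_def row_partition_def column_fits_def in_block_def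
  by (intro ex_cong1) (auto 0 0)

lemma contains_if_realizes:
  assumes "row_partition k m r" "realizes P k M r 0 l 0 n"
  shows "contains P k l M m n"
  using assms unfolding contains_iff_columns realizes_def by auto

lemma realizes_trans:
  assumes "realizes P k M r t0 t1 x y" "realizes P k M r t1 t2 y w"
  shows "realizes P k M r t0 t2 x w"
proof -
  obtain c1 where c1: "t0 \<le> t1" "c1 t0 = x" "c1 t1 = y"
    "\<forall>t. t0 \<le> t \<and> t < t1 \<longrightarrow> c1 t < c1 (Suc t) \<and> column_fits P k M r t (c1 t) (c1 (Suc t))"
    using assms(1) unfolding realizes_def by blast
  obtain c2 where c2: "t1 \<le> t2" "c2 t1 = y" "c2 t2 = w"
    "\<forall>t. t1 \<le> t \<and> t < t2 \<longrightarrow> c2 t < c2 (Suc t) \<and> column_fits P k M r t (c2 t) (c2 (Suc t))"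
    using assms(2) unfolding realizes_def by blast
  define c where "c t = (if t \<le> t1 then c1 t else c2 t)" for t
  have steps: "\<forall>t. t0 \<le> t \<and> t < t2 \<longrightarrow> c t < c (Suc t) \<and> column_fits P k M r t (c t) (c (Suc t))"
  proof (intro allI impI)
    fix t assume t: "t0 \<le> t \<and> t < t2"
    show "c t < c (Suc t) \<and> column_fits P k M r t (c t) (c (Suc t))"
    proof (cases "t < t1")
      case True
      then show ?thesis using c1 t unfolding c_def by auto
    next
      case False
      then have "c t = c2 t" "c (Suc t) = c2 (Suc t)" unfolding c_def using c1 c2 by auto
      then show ?thesis using c2 t False by auto
    qed
  qed
  have "c t0 = x" "c t2 = w" "t0 \<le> t2" unfolding c_def using c1 c2 by auto
  then show ?thesis unfolding realizes_def using steps by blast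
qed

lemma realizes_single:
  "x < y \<Longrightarrow> column_fits P k M r t x y \<Longrightarrow> realizes P k M r t (Suc t) x y"
  unfolding realizes_def
  by (intro conjI exI[of _ "\<lambda>s. if s \<le> t then x else y"]) (auto simp: less_Suc_eq)

lemma column_fits_set_one:
  "column_fits P k (set_one M a z) r t x y \<Longrightarrow> z < x \<or> y \<le> z \<Longrightarrow> column_fits P k M r t x y"
  unfolding column_fits_def set_one_def by (fastforce split: if_splits)

lemma column_fits_two_rows:
  assumes "ones_in_rows P k l {ia, io}" "t < l"
    and "in_block r ia a" "x \<le> e" "e < y" "M a e"
    and "P io t \<Longrightarrow> \<exists>b \<in> block_columns M n r io. x \<le> b \<and> b < y"
  shows "column_fits P k M r t x y"
  using assms unfolding column_fits_def ones_in_rows_def block_columns_def by blast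

lemma ones_before_mono: "x \<le> y \<Longrightarrow> ones_before M a x \<le> ones_before M a y"
  unfolding ones_before_def by (rule card_mono) auto

lemma ones_before_Suc:
  "ones_before M a (Suc x) = (if M a x then Suc (ones_before M a x) else ones_before M a x)"
proof -
  have "{b. b < Suc x \<and> M a b} =
      (if M a x then insert x {b. b < x \<and> M a b} else {b. b < x \<and> M a b})"
    by (auto simp: less_Suc_eq)
  then show ?thesis unfolding ones_before_def by auto
qed

lemma ones_before_less_imp_one:
  assumes "ones_before M a x < ones_before M a y"
  shows "\<exists>b. x \<le> b \<and> b < y \<and> M a b"
proof (rule ccontr)
  assume "\<not> ?thesis"
  then have "{b. b < y \<and> M a b} \<subseteq> {b. b < x \<and> M a b}" by auto
  then have "ones_before M a y \<le> ones_before M a x"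
    unfolding ones_before_def by (rule card_mono[rotated]) auto
  then show False using assms by simp
qed

lemma ones_before_eq_if_no_ones:
  "x \<le> y \<Longrightarrow> (\<forall>b. x \<le> b \<and> b < y \<longrightarrow> \<not> M a b) \<Longrightarrow> ones_before M a y = ones_before M a x"
  using ones_before_less_imp_one[of M a x y] ones_before_mono[of x y M a] by fastforce

lemma ones_before_less_Suc: "b \<le> b' \<Longrightarrow> M a b' \<Longrightarrow> ones_before M a b < ones_before M a (Suc b')"
  using ones_before_mono[of b b' M a] ones_before_Suc[of M a b'] by simp

lemma ones_before_next_one:
  assumes "ones_before M a x < ones_before M a y"
  obtains e where "x \<le> e" "e < y" "M a e" "ones_before M a (Suc e) = Suc (ones_before M a x)"
proof -
  obtain b where b: "x \<le> b" "b < y" "M a b" using ones_before_less_imp_one[OF assms] by blast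
  define e where "e = (LEAST e. x \<le> e \<and> M a e)"
  have e: "x \<le> e" "M a e" unfolding e_def by (rule LeastI2[of _ b]; use b in auto)+
  have "e \<le> b" unfolding e_def by (rule Least_le) (use b in auto)
  moreover have "ones_before M a e = ones_before M a x"
    using ones_before_eq_if_no_ones[OF e(1)] not_less_Least unfolding e_def by blast
  ultimately show thesis using that e b ones_before_Suc[of M a e] by simp
qed

subsection \<open>Greedy embeddings along a row\<close>

lemma increasing_choice:
  fixes f :: "'a \<Rightarrow> nat"
  assumes "finite S" "Suc l \<le> card (f ` S)"
  obtains b where "\<And>s. s \<le> l \<Longrightarrow> b s \<in> S" "\<And>s. s < l \<Longrightarrow> f (b s) < f (b (Suc s))"
proof -
  define xs where "xs = sorted_list_of_set (f ` S)"
  have len: "Suc l \<le> length xs" and set: "set xs = f ` S" and sorted: "sorted_wrt (<) xs"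
    using assms by (simp_all add: xs_def)
  define b where "b s = inv_into S f (xs ! s)" for s
  have b: "b s \<in> S \<and> f (b s) = xs ! s" if "s \<le> l" for s
  proof -
    have "xs ! s \<in> f ` S" using set len that nth_mem[of s xs] by simp
    then show ?thesis unfolding b_def by (simp add: inv_into_into f_inv_into_f)
  qed
  show thesis
  proof (rule that)
    show "b s \<in> S" if "s \<le> l" for s using b[OF that] by simp
    show "f (b s) < f (b (Suc s))" if "s < l" for s
      using b[of s] b[of "Suc s"] sorted_wrt_nth_less[OF sorted, of s "Suc s"] len that by simp
  qed
qed

lemma card_counts_on_block_columns_le:
  assumes rows: "ones_in_rows P k l {ia, io}" and r: "row_partition k m r" "in_block r ia a"
    and avoid: "\<not> contains P k l M m n" and l: "0 < l"
  shows "card (ones_before M a ` block_columns M n r io) \<le> l"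
  \<comment> \<open>Between columns with distinct counts lies a one of row \<open>a\<close>; so \<open>l + 1\<close> such columns
    of block \<open>io\<close> cut the matrix into \<open>l\<close> column intervals, each able to host a column of \<open>P\<close>.\<close>
proof (rule ccontr)
  assume "\<not> ?thesis"
  then have card: "Suc l \<le> card (ones_before M a ` block_columns M n r io)" by simp
  have fin: "finite (block_columns M n r io)" unfolding block_columns_def by simp
  obtain b where bZ: "\<And>s. s \<le> l \<Longrightarrow> b s \<in> block_columns M n r io"
    and inc: "\<And>s. s < l \<Longrightarrow> ones_before M a (b s) < ones_before M a (b (Suc s))"
    using increasing_choice[OF fin card] by blast
  define c where "c s = (if s = 0 then 0 else if s = l then n else b s)" for s
  have c: "c s \<le> b s" "b (Suc s) \<le> c (Suc s)" if "s < l" for s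
    using bZ[of l] that unfolding c_def block_columns_def by auto
  have "realizes P k M r 0 l 0 n" unfolding realizes_def
  proof (intro conjI exI[of _ c] allI impI)
    show "c 0 = 0" "c l = n" using l unfolding c_def by auto
    fix t assume t: "0 \<le> t \<and> t < l"
    obtain e where e: "b t \<le> e" "e < b (Suc t)" "M a e"
      using ones_before_less_imp_one[OF inc] t by blast
    show "c t < c (Suc t)" using c[of t] e t by simp
    have "b t \<in> block_columns M n r io" "c t \<le> b t" "b t < c (Suc t)" "c t \<le> e" "e < c (Suc t)"
      using bZ[of t] c[of t] e t by auto
    then show "column_fits P k M r t (c t) (c (Suc t))"
      using column_fits_two_rows[OF rows _ r(2), where e=e and n=n] e(3) t by blast
  qed simp
  then show False using contains_if_realizes r avoid by blast
qed

lemma realizes_along_row: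
  assumes rows: "ones_in_rows P k l {ia, io}" and a: "in_block r ia a" and T: "T < l"
    and y: "y' \<le> y"
    and last: "\<And>u. ones_before M a u < ones_before M a y' \<Longrightarrow> column_fits P k M r T u y"
  shows "K \<le> T \<Longrightarrow> ones_before M a x + Suc K \<le> ones_before M a y' \<Longrightarrow>
    (\<forall>t. T - K \<le> t \<and> t < T \<longrightarrow> \<not> P io t) \<Longrightarrow> realizes P k M r (T - K) (Suc T) x y"
proof (induction K arbitrary: x)
  case 0
  then have less: "ones_before M a x < ones_before M a y'" by simp
  then obtain b where "x \<le> b" "b < y'" using ones_before_less_imp_one by blast
  then show ?case using last[OF less] realizes_single y by simp
next
  case (Suc K)
  then have "ones_before M a x < ones_before M a y'" by simp
  then obtain e where e: "x \<le> e" "M a e" "ones_before M a (Suc e) = Suc (ones_before M a x)"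
    by (rule ones_before_next_one)
  have "column_fits P k M r (T - Suc K) x (Suc e)"
    by (rule column_fits_two_rows[OF rows _ a]) (use Suc.prems e T in auto)
  moreover have "T - K = Suc (T - Suc K)" using Suc.prems(1) by simp
  ultimately have first: "realizes P k M r (T - Suc K) (T - K) x (Suc e)"
    using realizes_single[of x "Suc e"] e(1) by simp
  have "\<forall>t. T - K \<le> t \<and> t < T \<longrightarrow> \<not> P io t" using Suc.prems(3) by auto
  then have "realizes P k M r (T - K) (Suc T) (Suc e) y"
    using Suc.IH[of "Suc e"] Suc.prems(1,2) e(3) by simp
  with first show ?case by (rule realizes_trans)
qed

subsection \<open>Inserting a single one-entry\<close>

locale insertion_witness =
  fixes P :: bmat and k l :: nat and M :: bmat and m n a z ia io j :: nat and r c :: "nat \<Rightarrow> nat"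
  assumes rows: "ones_in_rows P k l {ia, io}" and rows_distinct: "ia \<noteq> io" "ia < k" "io < k"
    and partition: "row_partition k m r"
    and boundaries: "c 0 = 0" "c l = n" "\<forall>t<l. c t < c (Suc t)"
    and fits: "\<forall>t<l. column_fits P k (set_one M a z) r t (c t) (c (Suc t))"
    and witness: "j < l" "in_block r ia a" "c j \<le> z" "z < c (Suc j)"
    and empty: "\<forall>a' b. in_block r ia a' \<and> c j \<le> b \<and> b < c (Suc j) \<longrightarrow> \<not> M a' b"
    and avoid: "\<not> contains P k l M m n"
begin

lemma realizes_away_from_insertion:
  assumes "t0 \<le> t1" "t1 \<le> l" "c t1 \<le> z \<or> z < c t0"
  shows "realizes P k M r t0 t1 (c t0) (c t1)"
  unfolding realizes_def
proof (intro conjI exI[of _ c] allI impI)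
  fix t assume t: "t0 \<le> t \<and> t < t1"
  show "c t < c (Suc t)" using boundaries(3) t assms(2) by simp
  have "c t0 \<le> c t" "c (Suc t) \<le> c t1"
    using increasing_upto_le[OF boundaries(3)] t assms(2) by auto
  then have "z < c t \<or> c (Suc t) \<le> z" using assms(3) by linarith
  moreover have "column_fits P k (set_one M a z) r t (c t) (c (Suc t))" using fits t assms(2) by simp
  ultimately show "column_fits P k M r t (c t) (c (Suc t))" using column_fits_set_one by blast
qed (use assms in auto)

lemma other_row_one:
  assumes "t < l" "P io t"
  shows "\<exists>w \<in> block_columns M n r io. c t \<le> w \<and> w < c (Suc t)"
proof -
  have "column_fits P k (set_one M a z) r t (c t) (c (Suc t))" using fits assms(1) by simp
  then obtain a' w where w: "in_block r io a'" "c t \<le> w" "w < c (Suc t)" "set_one M a z a' w"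
    using assms(2) rows_distinct(3) unfolding column_fits_def by blast
  have "a' \<noteq> a" using in_block_unique[OF partition] rows_distinct w(1) witness(2) by blast
  then have "M a' w" using w(4) unfolding set_one_def by simp
  moreover have "w < n"
    using w(3) increasing_upto_le[OF boundaries(3), of "Suc t" l] assms boundaries(2) by simp
  ultimately show ?thesis using w unfolding block_columns_def by blast
qed

lemma witness_column_fits:
  assumes "ones_before M a u < ones_before M a z"
  shows "column_fits P k M r j u (c (Suc j))"
proof -
  have "\<forall>b. c j \<le> b \<and> b < z \<longrightarrow> \<not> M a b" using empty witness(2,4) by auto
  then have "ones_before M a z = ones_before M a (c j)"
    using ones_before_eq_if_no_ones[OF witness(3)] by simp
  then obtain e where e: "u \<le> e" "e < c j" "M a e"
    using ones_before_less_imp_one assms by metis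
  show ?thesis
  proof (rule column_fits_two_rows[OF rows witness(1) witness(2) e(1)])
    show "e < c (Suc j)" using e(2) boundaries(3) witness(1) by (meson less_trans)
    show "M a e" by (fact e(3))
    show "\<exists>b\<in>block_columns M n r io. u \<le> b \<and> b < c (Suc j)" if pio: "P io j"
    proof -
      obtain w where "w \<in> block_columns M n r io" "c j \<le> w" "w < c (Suc j)"
        using other_row_one[OF witness(1) pio] by blast
      then show ?thesis using e by (intro bexI[of _ w]) auto
    qed
  qed
qed

lemma realizes_up_to_insertion:
  assumes "t \<le> j" "ones_before M a x + Suc (j - t) \<le> ones_before M a z"
    and "\<forall>t'. t \<le> t' \<and> t' < j \<longrightarrow> \<not> P io t'"
  shows "realizes P k M r t (Suc j) x (c (Suc j))"
  using realizes_along_row[OF rows witness(2) witness(1) less_imp_le[OF witness(4)]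
      witness_column_fits, of "j - t" x] assms by simp

lemma no_realization_through_insertion:
  assumes "realizes P k M r 0 (Suc j) 0 (c (Suc j))"
  shows False
proof -
  have "realizes P k M r (Suc j) l (c (Suc j)) n"
    using realizes_away_from_insertion[of "Suc j" l] witness boundaries(2) by simp
  then show False
    using realizes_trans[OF assms] contains_if_realizes partition avoid by blast
qed

lemma ones_before_insertion_le_if_no_earlier:
  assumes "\<forall>t<j. \<not> P io t"
  shows "ones_before M a z \<le> l"
proof (rule ccontr)
  assume "\<not> ?thesis"
  then have "realizes P k M r 0 (Suc j) 0 (c (Suc j))"
    using realizes_up_to_insertion[of 0 0] assms witness(1) by (simp add: ones_before_def)
  then show False by (rule no_realization_through_insertion)
qed

lemma ones_before_insertion_near_block_column:
  assumes i0: "i0 < j" "P io i0" "\<forall>t. i0 < t \<and> t < j \<longrightarrow> \<not> P io t"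
  shows "\<exists>w \<in> block_columns M n r io. w < z \<and> ones_before M a z \<le> ones_before M a w + l"
  \<comment> \<open>Otherwise the columns \<open>i0, ..., j\<close> of \<open>P\<close> can be re-embedded through the ones of row \<open>a\<close>
    after \<open>w\<close>, which avoids the inserted entry.\<close>
proof -
  obtain w where w: "w \<in> block_columns M n r io" "c i0 \<le> w" "w < c (Suc i0)"
    using other_row_one[OF _ i0(2)] i0(1) witness(1) by (metis less_trans)
  have i0_z: "c (Suc i0) \<le> z"
    using increasing_upto_le[OF boundaries(3), of "Suc i0" j] i0(1) witness by simp
  have "ones_before M a z \<le> ones_before M a w + l"
  proof (rule ccontr)
    assume "\<not> ?thesis"
    then have many: "ones_before M a w + l < ones_before M a z" by simp
    then have "ones_before M a w < ones_before M a z" by simp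
    then obtain e where e: "w \<le> e" "M a e" "ones_before M a (Suc e) = Suc (ones_before M a w)"
      by (rule ones_before_next_one)
    have "realizes P k M r 0 i0 0 (c i0)"
      using realizes_away_from_insertion[of 0 i0] i0_z boundaries(1,3) i0(1) witness(1)
      by (metis le0 less_imp_le order.trans less_trans)
    moreover have "column_fits P k M r i0 (c i0) (Suc e)"
    proof (rule column_fits_two_rows[OF rows _ witness(2)])
      show "i0 < l" using i0(1) witness(1) by simp
      show "c i0 \<le> e" "e < Suc e" "M a e" using w(2) e(1,2) by auto
      show "\<exists>b\<in>block_columns M n r io. c i0 \<le> b \<and> b < Suc e"
        using w(1,2) e(1) by (intro bexI[of _ w]) auto
    qed
    then have "realizes P k M r i0 (Suc i0) (c i0) (Suc e)"
      using realizes_single w(2) e(1) by simp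
    moreover have "realizes P k M r (Suc i0) (Suc j) (Suc e) (c (Suc j))"
      using realizes_up_to_insertion[of "Suc i0" "Suc e"] i0 e(3) witness(1) many by simp
    ultimately show False
      using no_realization_through_insertion realizes_trans by blast
  qed
  then show ?thesis using w i0_z by (intro bexI[of _ w]) auto
qed

lemma ones_before_insertion_le:
  "ones_before M a z \<le> l \<or>
    (\<exists>w \<in> block_columns M n r io. w < z \<and> ones_before M a z \<le> ones_before M a w + l)"
proof (cases "\<exists>t<j. P io t")
  case True
  define i0 where "i0 = Max {t. t < j \<and> P io t}"
  have fin: "finite {t. t < j \<and> P io t}" by simp
  have "{t. t < j \<and> P io t} \<noteq> {}" using True by blast
  then have "i0 \<in> {t. t < j \<and> P io t}" unfolding i0_def using Max_in[OF fin] by blast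
  moreover have "\<forall>t. i0 < t \<and> t < j \<longrightarrow> \<not> P io t"
    using Max_ge[OF fin] leD unfolding i0_def by blast
  ultimately show ?thesis using ones_before_insertion_near_block_column by blast
qed (use ones_before_insertion_le_if_no_earlier in blast)

end

lemma critical_insertion_witness:
  assumes rows: "ones_in_rows P k l {i1, i2}" "i1 \<noteq> i2" "i1 < k" "i2 < k"
    and crit: "critical P k l M m n" and z: "a < m" "z < n" "\<not> M a z"
  obtains ia io j r c where "(ia, io) = (i1, i2) \<or> (ia, io) = (i2, i1)"
    "insertion_witness P k l M m n a z ia io j r c"
proof -
  have avoid: "\<not> contains P k l M m n" using crit unfolding critical_def avoids_def by blast
  have "contains P k l (set_one M a z) m n" using crit z unfolding critical_def by blast
  then obtain r c where r: "row_partition k m r" and c: "c 0 = 0" "c l = n"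
    and cols: "\<forall>t<l. c t < c (Suc t) \<and> column_fits P k (set_one M a z) r t (c t) (c (Suc t))"
    unfolding contains_iff_columns by blast
  have "\<not> (\<forall>t<l. column_fits P k M r t (c t) (c (Suc t)))"
    using avoid r c cols unfolding contains_iff_columns by blast
  then obtain i j where ij: "i < k" "j < l" "P i j"
    and empty: "\<forall>a' b. in_block r i a' \<and> c j \<le> b \<and> b < c (Suc j) \<longrightarrow> \<not> M a' b"
    unfolding column_fits_def by blast
  obtain a' b where ab: "in_block r i a'" "c j \<le> b" "b < c (Suc j)" "set_one M a z a' b"
    using cols ij unfolding column_fits_def by blast
  then have "a' = a \<and> b = z" using empty unfolding set_one_def by (auto split: if_splits)
  with ab have inserted: "in_block r i a" "c j \<le> z" "z < c (Suc j)" by auto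
  obtain i' where i': "(i, i') = (i1, i2) \<or> (i, i') = (i2, i1)"
    using rows(1) ij unfolding ones_in_rows_def by blast
  then have "i \<noteq> i'" "i < k" "i' < k" "{i, i'} = {i1, i2}" using rows by auto
  then have "insertion_witness P k l M m n a z i i' j r c"
    using rows(1) r c cols ij(2) inserted empty avoid by unfold_locales auto
  then show thesis using that i' by blast
qed

subsection \<open>Anchor counts\<close>

definition two_block_partition :: "nat \<Rightarrow> nat \<Rightarrow> nat \<Rightarrow> nat \<Rightarrow> nat \<Rightarrow> nat \<Rightarrow> nat" where
  "two_block_partition k m i1 i2 s i = (if i \<le> i1 then i else if i \<le> i2 then s + i else m + i - k)"

lemma row_partition_two_block:
  assumes "i1 < i2" "i2 < k" "s + k \<le> m"
  shows "row_partition k m (two_block_partition k m i1 i2 s)"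
  unfolding row_partition_def two_block_partition_def using assms by auto

text \<open>Given that row \<open>a\<close> lies in block \<open>ia\<close>, this partition makes block \<open>io\<close> as large as
  possible: all other blocks are single rows, packed against \<open>a\<close> and against the matrix border.\<close>

definition widest_partition :: "nat \<Rightarrow> nat \<Rightarrow> nat \<Rightarrow> nat \<Rightarrow> nat \<Rightarrow> nat \<Rightarrow> nat" where
  "widest_partition k m ia io a = two_block_partition k m (min ia io) (max ia io) (a - ia)"

lemma widest_partition_covers:
  assumes r: "row_partition k m r" and rows: "ia \<noteq> io" "ia < k" "io < k" and a: "in_block r ia a"
  defines "R \<equiv> widest_partition k m ia io a"
  shows "row_partition k m R" "in_block R ia a" "in_block r io a' \<Longrightarrow> in_block R io a'"
proof -
  have gap: "r i + (i' - i) \<le> r i'" if "i \<le> i'" "i' \<le> k" for i i'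
    using row_partition_le[OF r that] .
  have ends: "r 0 = 0" "r k = m" "r ia < r (Suc ia)" "r io < r (Suc io)"
    using r rows unfolding row_partition_def by auto
  have "a - ia + k \<le> m"
    using gap[of 0 ia] gap[of "Suc ia" k] ends a rows unfolding in_block_def by linarith
  show "row_partition k m R"
    using row_partition_two_block[OF _ _ \<open>a - ia + k \<le> m\<close>] rows
    unfolding R_def widest_partition_def by (simp add: min_def max_def)
  show "in_block R ia a"
    using gap[of 0 ia] gap[of "Suc ia" k] ends a rows
    unfolding R_def widest_partition_def two_block_partition_def in_block_def by (auto simp: min_def max_def)
  show "in_block R io a'" if "in_block r io a'"
  proof (cases "ia < io")
    case True
    then show ?thesis
      using gap[of 0 ia] gap[of "Suc ia" io] gap[of "Suc io" k] ends a rows that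
      unfolding R_def widest_partition_def two_block_partition_def in_block_def by (auto simp: max_def)
  next
    case False
    then show ?thesis
      using gap[of 0 io] gap[of "Suc io" ia] ends a rows that
      unfolding R_def widest_partition_def two_block_partition_def in_block_def by (auto simp: min_def max_def)
  qed
qed

definition anchor_counts :: "bmat \<Rightarrow> nat \<Rightarrow> nat \<Rightarrow> nat \<Rightarrow> nat \<Rightarrow> nat \<Rightarrow> nat \<Rightarrow> nat set" where
  "anchor_counts M k m n ia io a =
     (if row_partition k m (widest_partition k m ia io a) \<and> in_block (widest_partition k m ia io a) ia a
      then ones_before M a ` block_columns M n (widest_partition k m ia io a) io else {})"

lemma finite_anchor_counts: "finite (anchor_counts M k m n ia io a)"
  unfolding anchor_counts_def block_columns_def by simp

lemma card_anchor_counts_le: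
  "ones_in_rows P k l {ia, io} \<Longrightarrow> \<not> contains P k l M m n \<Longrightarrow> 0 < l \<Longrightarrow>
    card (anchor_counts M k m n ia io a) \<le> l"
  unfolding anchor_counts_def using card_counts_on_block_columns_le by auto

lemma anchor_counts_if_block_column:
  assumes "row_partition k m r" "ia \<noteq> io" "ia < k" "io < k" "in_block r ia a"
    and "w \<in> block_columns M n r io"
  shows "ones_before M a w \<in> anchor_counts M k m n ia io a"
  using widest_partition_covers[OF assms(1-5)] assms(6)
  unfolding anchor_counts_def block_columns_def by auto

lemma zero_count_near_anchor:
  assumes rows: "ones_in_rows P k l {i1, i2}" "i1 \<noteq> i2" "i1 < k" "i2 < k"
    and crit: "critical P k l M m n" and z: "a < m" "z < n" "\<not> M a z"
  shows "\<exists>v \<in> {0} \<union> anchor_counts M k m n i1 i2 a \<union> anchor_counts M k m n i2 i1 a.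
    ones_before M a z \<in> {v..v + l}"
proof -
  obtain ia io j r c where side: "(ia, io) = (i1, i2) \<or> (ia, io) = (i2, i1)"
    and W: "insertion_witness P k l M m n a z ia io j r c"
    by (rule critical_insertion_witness[OF assms])
  interpret insertion_witness P k l M m n a z ia io j r c by (fact W)
  show ?thesis
    using ones_before_insertion_le
  proof
    assume "ones_before M a z \<le> l"
    then show ?thesis by auto
  next
    assume "\<exists>w \<in> block_columns M n r io. w < z \<and> ones_before M a z \<le> ones_before M a w + l"
    then obtain w where w: "w \<in> block_columns M n r io" "w < z"
      and near: "ones_before M a z \<le> ones_before M a w + l" by blast
    have "ones_before M a w \<in> anchor_counts M k m n ia io a"
      using anchor_counts_if_block_column[OF partition rows_distinct witness(2) w(1)] .
    moreover have "ones_before M a w \<le> ones_before M a z" using ones_before_mono w(2) by simp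
    ultimately show ?thesis using near side by auto
  qed
qed

lemma row_complexity_le_card:
  assumes "finite X" "\<And>z. z < n \<Longrightarrow> \<not> M a z \<Longrightarrow> ones_before M a z \<in> X"
  shows "row_complexity M n a \<le> card X"
proof -
  define S where "S = {b. b < n \<and> \<not> M a b \<and> (b = 0 \<or> M a (b - 1))}"
  have "ones_before M a b < ones_before M a b'" if "b \<in> S" "b' \<in> S" "b < b'" for b b'
    using that ones_before_less_Suc[of b "b' - 1" M a] unfolding S_def by auto
  then have "inj_on (ones_before M a) S" by (intro linorder_inj_onI') (metis less_irrefl)
  then have "row_complexity M n a = card (ones_before M a ` S)"
    unfolding row_complexity_def S_def by (simp add: card_image)
  also have "\<dots> \<le> card X" using assms by (intro card_mono) (auto simp: S_def)
  finally show ?thesis .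
qed

lemma card_UN_intervals_le: "finite A \<Longrightarrow> card (\<Union>v\<in>A. {v..v + l}) \<le> card A * Suc l"
  using card_UN_le[of A "\<lambda>v. {v..v + l}"] by simp

lemma critical_row_complexity_le:
  assumes rows: "ones_in_rows P k l {i1, i2}" "i1 \<noteq> i2" "i1 < k" "i2 < k" and l: "0 < l"
    and crit: "critical P k l M m n" and a: "a < m"
  shows "row_complexity M n a \<le> Suc (2 * l) * Suc l"
proof -
  define A where "A = {0} \<union> anchor_counts M k m n i1 i2 a \<union> anchor_counts M k m n i2 i1 a"
  have avoid: "\<not> contains P k l M m n" using crit unfolding critical_def avoids_def by blast
  have fin: "finite A" unfolding A_def by (simp add: finite_anchor_counts)
  have "card A \<le> card ({0::nat} \<union> anchor_counts M k m n i1 i2 a) + card (anchor_counts M k m n i2 i1 a)"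
    unfolding A_def by (rule card_Un_le)
  also have "\<dots> \<le> 1 + card (anchor_counts M k m n i1 i2 a) + card (anchor_counts M k m n i2 i1 a)"
    using card_Un_le[of "{0::nat}" "anchor_counts M k m n i1 i2 a"] by simp
  also have "\<dots> \<le> 1 + l + l"
    using card_anchor_counts_le[OF rows(1) avoid l] card_anchor_counts_le[OF _ avoid l, of i2 i1] rows(1)
    by (simp add: insert_commute add_mono)
  finally have "card A \<le> 1 + l + l" .
  have "row_complexity M n a \<le> card (\<Union>v\<in>A. {v..v + l})"
    using zero_count_near_anchor[OF rows crit a] fin by (intro row_complexity_le_card) (auto simp: A_def)
  also have "\<dots> \<le> card A * Suc l" using card_UN_intervals_le[OF fin] .
  also have "\<dots> \<le> Suc (2 * l) * Suc l" using \<open>card A \<le> 1 + l + l\<close> by (intro mult_le_mono1) simp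
  finally show ?thesis .
qed

theorem lemma3p14:
  fixes P :: bmat and k l :: nat
  assumes "card {i. i < k \<and> nonempty_row P l i} = 2"
  shows "row_bounding P k l"
proof -
  obtain i1 i2 where I: "{i. i < k \<and> nonempty_row P l i} = {i1, i2}" "i1 \<noteq> i2"
    using assms unfolding card_2_iff by blast
  then have "i1 < k \<and> nonempty_row P l i1" "i2 < k" by auto
  then have rows: "i1 < k" "i2 < k" and l: "0 < l" unfolding nonempty_row_def by auto
  have "ones_in_rows P k l {i1, i2}"
    unfolding ones_in_rows_def nonempty_row_def I(1)[symmetric] by blast
  then have "\<forall>M m n. critical P k l M m n \<longrightarrow> (\<forall>a<m. row_complexity M n a \<le> Suc (2 * l) * Suc l)"
    using critical_row_complexity_le[OF _ I(2) rows l] by blast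
  then show ?thesis unfolding row_bounding_def by blast
qed

end
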